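(* Let $\mathtt{a},\mathtt{b}\in\Sigma$ be distinct letters. None of the following languages is in $\mathcal{L}(\mathsf{FC})$: $L_1=\{\mathtt{a}^n(\mathtt{ba})^n : n\in\mathbb{N}\}$; $L_2=\{\mathtt{a}^i(\mathtt{ba})^j : 1\le i\le j\}$; $L_3=\{\mathtt{b}^n\mathtt{a}^m\mathtt{b}^{n+m} : m,n\in\mathbb{N}\}$; $L_4=\{\mathtt{b}^n\mathtt{a}^m\mathtt{b}^{n\cdot m} : m,n\in\mathbb{N}\}$; $L_5=\{(\mathtt{abaabb})^m(\mathtt{bbaaba})^m : m\in\mathbb{N}\}$; $L_6=\{\mathtt{a}^n\mathtt{b}^n(\mathtt{ab})^n : n\in\mathbb{N}\}$.
   Context: $\Sigma$ is a fixed finite alphabet. For $w \in \Sigma^*$, $\mathsf{Facs}(w)$ is the set of all factors of $w$. The structure $\mathfrak{A}_w$ representing $w$ has universe $\mathsf{Facs}(w)\cup\{\perp\}$, a ternary relation $R_\circ=\{(x,y,z)\in\mathsf{Facs}(w)^3 : x=y\cdot z\}$, for each letter a constant interpreted as that letter if it occurs in $w$ and as $\perp$ otherwise, and a constant $\varepsilon$ interpreted as the empty word. $\mathsf{FC}$ is first-order logic over such structures, with atomic formulas $(x \mathbin{\dot=} y\cdot z)$ (meaning $R_\circ(x,y,z)$) where $x,y,z$ are variables, letters of $\Sigma$, or $\varepsilon$, closed under $\land,\lor,\neg,\exists,\forall$; quantified variables range over $\mathsf{Facs}(w)$. For a sentence $\varphi$, $\mathcal{L}(\varphi)=\{w\in\Sigma^*:\mathfrak{A}_w\models\varphi\}$,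 and $\mathcal{L}(\mathsf{FC})$ is the class of all such languages. *)

theory Defs
  imports Main "HOL-Library.Sublist"
begin

datatype 'a fc_term = FVar nat | FLet 'a | FEps

datatype 'a fc =
    FCat "'a fc_term" "'a fc_term" "'a fc_term"   (* x = y . z *)
  | FAnd "'a fc" "'a fc"
  | FOr "'a fc" "'a fc"
  | FNot "'a fc"
  | FEx nat "'a fc"
  | FAll nat "'a fc"

definition facs :: "'a list \<Rightarrow> 'a list set" where
  "facs w = {u. sublist u w}"

text \<open>Interpretation of a term in the structure of w: None represents bottom.
  Letters not occurring in w are interpreted as bottom.\<close>
fun term_val :: "'a list \<Rightarrow> (nat \<Rightarrow> 'a list option) \<Rightarrow> 'a fc_term \<Rightarrow> 'a list option" where
  "term_val w \<sigma> (FVar x) = \<sigma> x"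
| "term_val w \<sigma> (FLet c) = (if c \<in> set w then Some [c] else None)"
| "term_val w \<sigma> FEps = Some []"

text \<open>Satisfaction; quantified variables range over facs w. R_o only relates factors.\<close>
fun fc_sat :: "'a list \<Rightarrow> (nat \<Rightarrow> 'a list option) \<Rightarrow> 'a fc \<Rightarrow> bool" where
  "fc_sat w \<sigma> (FCat s t u) =
     (\<exists>x y z. term_val w \<sigma> s = Some x \<and> term_val w \<sigma> t = Some y \<and> term_val w \<sigma> u = Some z
        \<and> x \<in> facs w \<and> y \<in> facs w \<and> z \<in> facs w \<and> x = y @ z)"
| "fc_sat w \<sigma> (FAnd \<phi> \<psi>) = (fc_sat w \<sigma> \<phi> \<and> fc_sat w \<sigma> \<psi>)"
| "fc_sat w \<sigma> (FOr \<phi> \<psi>) = (fc_sat w \<sigma> \<phi> \<or> fc_sat w \<sigma> \<psi>)"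
| "fc_sat w \<sigma> (FNot \<phi>) = (\<not> fc_sat w \<sigma> \<phi>)"
| "fc_sat w \<sigma> (FEx x \<phi>) = (\<exists>u \<in> facs w. fc_sat w (\<sigma>(x := Some u)) \<phi>)"
| "fc_sat w \<sigma> (FAll x \<phi>) = (\<forall>u \<in> facs w. fc_sat w (\<sigma>(x := Some u)) \<phi>)"

fun tvars :: "'a fc_term \<Rightarrow> nat set" where
  "tvars (FVar x) = {x}"
| "tvars (FLet c) = {}"
| "tvars FEps = {}"

fun free_vars :: "'a fc \<Rightarrow> nat set" where
  "free_vars (FCat s t u) = tvars s \<union> tvars t \<union> tvars u"
| "free_vars (FAnd \<phi> \<psi>) = free_vars \<phi> \<union> free_vars \<psi>"
| "free_vars (FOr \<phi> \<psi>) = free_vars \<phi> \<union> free_vars \<psi>"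
| "free_vars (FNot \<phi>) = free_vars \<phi>"
| "free_vars (FEx x \<phi>) = free_vars \<phi> - {x}"
| "free_vars (FAll x \<phi>) = free_vars \<phi> - {x}"

definition fc_sentence :: "'a fc \<Rightarrow> bool" where
  "fc_sentence \<phi> \<longleftrightarrow> free_vars \<phi> = {}"

text \<open>For a sentence the assignment is irrelevant; we use the empty one.\<close>
definition fc_lang :: "'a fc \<Rightarrow> 'a list set" where
  "fc_lang \<phi> = {w. fc_sat w (\<lambda>_. None) \<phi>}"

definition FC_languages :: "('a::finite) list set set" where
  "FC_languages = {L. \<exists>\<phi>. fc_sentence \<phi> \<and> L = fc_lang \<phi>}"

definition pw :: "'a list \<Rightarrow> nat \<Rightarrow> 'a list" where
  "pw u n = concat (replicate n u)"

end

theory Submission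
  imports Defs
begin

text \<open>Let \<open>X\<close> and \<open>Y\<close> be families of words such that no \<open>X p\<close> and \<open>Y q\<close> share a common
  factor longer than \<open>K\<close>. Every factor of \<open>X p @ Y q\<close> splits as \<open>s @ t\<close> with \<open>s\<close> a factor of
  \<open>X p\<close> and \<open>t\<close> a factor of \<open>Y q\<close>, and an equation \<open>x = y @ z\<close> between such split factors
  is decided by a condition on the left parts and one on the right parts, up to finitely many
  overlap words of length at most \<open>K\<close> (the alphabet is finite). By induction on formulas, the
  set of pairs \<open>(p, q)\<close> with \<open>X p @ Y q\<close> in an FC language is therefore a finite union of
  rectangles. Such a set containing the diagonal \<open>(n, n)\<close> must contain two swapped
  off-diagonal points \<open>(n, m)\<close> and \<open>(m, n)\<close>; for each of the six languages suitable families
  \<open>X\<close> and \<open>Y\<close> exclude this.\<close>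

inductive rectangular :: "('x \<times> 'y) set \<Rightarrow> bool" where
  rectangular_empty: "rectangular {}"
| rectangular_Times: "rectangular (A \<times> B)"
| rectangular_Un: "rectangular S \<Longrightarrow> rectangular T \<Longrightarrow> rectangular (S \<union> T)"

lemma rectangular_Times_Int: "rectangular T \<Longrightarrow> rectangular ((A \<times> B) \<inter> T)"
  by (induction rule: rectangular.induct)
    (simp_all add: Times_Int_Times Int_Un_distrib rectangular.intros)

lemma rectangular_Int: "rectangular S \<Longrightarrow> rectangular T \<Longrightarrow> rectangular (S \<inter> T)"
  by (induction rule: rectangular.induct)
    (simp_all add: rectangular_Times_Int Int_Un_distrib2 rectangular.intros)

lemma rectangular_Compl: "rectangular S \<Longrightarrow> rectangular (- S)"
proof (induction rule: rectangular.induct)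
  case rectangular_empty
  show ?case using rectangular_Times[of UNIV UNIV] by simp
next
  case (rectangular_Times A B)
  have "- (A \<times> B) = (- A) \<times> UNIV \<union> UNIV \<times> (- B)" by auto
  then show ?case by (simp add: rectangular.intros)
next
  case (rectangular_Un S T)
  then show ?case by (simp add: rectangular_Int)
qed

lemma rectangular_vimage: "rectangular S \<Longrightarrow> rectangular (map_prod f g -` S)"
proof (induction rule: rectangular.induct)
  case (rectangular_Times A B)
  have "map_prod f g -` (A \<times> B) = (f -` A) \<times> (g -` B)" by auto
  then show ?case by (simp add: rectangular.intros)
qed (simp_all add: vimage_Un rectangular.intros)

lemma rectangular_image: "rectangular S \<Longrightarrow> rectangular (map_prod f g ` S)"
  by (induction rule: rectangular.induct)
    (simp_all add: map_prod_surj_on image_Un rectangular.intros)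

lemma rectangular_UN:
  "finite I \<Longrightarrow> (\<And>i. i \<in> I \<Longrightarrow> rectangular (F i)) \<Longrightarrow> rectangular (\<Union>i\<in>I. F i)"
  by (induction rule: finite_induct) (auto intro: rectangular.intros)

lemma rectangular_finite_cover:
  "rectangular S \<Longrightarrow> \<exists>R. finite R \<and> S = (\<Union>r\<in>R. fst r \<times> snd r)"
proof (induction rule: rectangular.induct)
  case rectangular_empty
  show ?case by (intro exI[of _ "{}"]) auto
next
  case (rectangular_Times A B)
  show ?case by (intro exI[of _ "{(A, B)}"]) auto
next
  case (rectangular_Un S T)
  then obtain R R' where "finite R" "S = (\<Union>r\<in>R. fst r \<times> snd r)"
    and "finite R'" "T = (\<Union>r\<in>R'. fst r \<times> snd r)"
    by blast
  then show ?case by (intro exI[of _ "R \<union> R'"]) auto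
qed

text \<open>A rectangle meeting the diagonal in two points contains the two swapped points, and
  finitely many rectangles cannot cover the infinite diagonal without that happening.\<close>
lemma rectangular_diagonal_swap:
  assumes "rectangular D" and "\<And>n::nat. (n, n) \<in> D"
  shows "\<exists>n m. n \<noteq> m \<and> (n, m) \<in> D \<and> (m, n) \<in> D"
proof -
  obtain R where R: "finite R" "D = (\<Union>r\<in>R. fst r \<times> snd r)"
    using rectangular_finite_cover[OF assms(1)] by blast
  have "\<forall>n. \<exists>r\<in>R. (n, n) \<in> fst r \<times> snd r"
    using assms(2) unfolding R(2) by auto
  then obtain r where r: "\<And>n. r n \<in> R \<and> (n, n) \<in> fst (r n) \<times> snd (r n)"
    by metis
  have "finite (range r)"
    using r R(1) by (meson finite_subset image_subsetI)
  then have "\<not> inj r"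
    using finite_imageD[of r UNIV] by auto
  then obtain n m where "n \<noteq> m" "r n = r m"
    unfolding inj_def by blast
  moreover have "fst (r n) \<times> snd (r n) \<subseteq> D"
    using r[of n] R(2) by auto
  ultimately show ?thesis
    using r[of n] r[of m] by auto
qed

definition factor_split :: "'a list \<Rightarrow> 'a list \<Rightarrow> 'a list \<Rightarrow> 'a list \<Rightarrow> bool" where
  "factor_split u v s t \<longleftrightarrow>
     sublist s u \<and> sublist t v \<and> (s \<noteq> [] \<and> t \<noteq> [] \<longrightarrow> suffix s u \<and> prefix t v)"

lemma facs_append_iff: "w \<in> facs (u @ v) \<longleftrightarrow> (\<exists>s t. factor_split u v s t \<and> w = s @ t)"
  by (auto simp: facs_def factor_split_def sublist_append)

lemma rectangular_factor_split:
  "rectangular {((p, s), (q, t)). factor_split (X p) (Y q) s t}"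
proof -
  have "{((p, s), (q, t)). factor_split (X p) (Y q) s t} =
      {(p, s). s = []} \<times> {(q, t). sublist t (Y q)}
    \<union> {(p, s). sublist s (X p)} \<times> {(q, t). t = []}
    \<union> {(p, s). suffix s (X p)} \<times> {(q, t). prefix t (Y q)}"
    by (auto simp: factor_split_def)
  then show ?thesis by (simp add: rectangular.intros)
qed

definition overlap_bounded :: "('p \<Rightarrow> 'a list) \<Rightarrow> ('q \<Rightarrow> 'a list) \<Rightarrow> nat \<Rightarrow> bool" where
  "overlap_bounded X Y K \<longleftrightarrow> (\<forall>p q z. sublist z (X p) \<longrightarrow> sublist z (Y q) \<longrightarrow> length z \<le> K)"

text \<open>The possible shapes of an equation \<open>s1 @ t1 = s2 @ t2 @ s3 @ t3\<close> between splits
  \<open>s\<^sub>i @ t\<^sub>i\<close> of factors of \<open>u @ v\<close>; each disjunct is a conjunction of a condition on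
  the left parts and one on the right parts, which interact only through \<open>z\<close> and \<open>w\<close>.\<close>
definition concat_pattern ::
    "'a list \<Rightarrow> 'a list \<Rightarrow> 'a list \<times> 'a list \<times> 'a list \<Rightarrow> 'a list \<times> 'a list \<times> 'a list \<Rightarrow> bool" where
  "concat_pattern z w = (\<lambda>(s1, s2, s3) (t1, t2, t3).
       (s2 = s1 @ z \<and> s3 = w \<and> t1 = z @ t2 @ w @ t3)
     \<or> (s1 = s2 @ z \<and> s3 = w \<and> (\<exists>z'. t2 = z @ z' \<and> t1 = z' @ w @ t3))
     \<or> ((\<exists>y. s1 = s2 @ z @ y \<and> s3 = y @ w) \<and> t2 = z \<and> t1 = w @ t3)
     \<or> (s1 = s2 @ z @ s3 @ w \<and> t2 = z \<and> t3 = w @ t1))"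

lemma concat_eq_if_concat_pattern:
  "concat_pattern z w (s1, s2, s3) (t1, t2, t3) \<Longrightarrow> s1 @ t1 = s2 @ t2 @ s3 @ t3"
  by (auto simp: concat_pattern_def)

lemma rectangular_concat_pattern:
  "rectangular {((p :: 'p, ss), (q :: 'q, ts)). concat_pattern z w ss ts}"
proof -
  have "{((p :: 'p, ss), (q :: 'q, ts)). concat_pattern z w ss ts} =
      {(p, s1, s2, s3). s2 = s1 @ z \<and> s3 = w} \<times> {(q, t1, t2, t3). t1 = z @ t2 @ w @ t3}
    \<union> {(p, s1, s2, s3). s1 = s2 @ z \<and> s3 = w}
      \<times> {(q, t1, t2, t3). \<exists>z'. t2 = z @ z' \<and> t1 = z' @ w @ t3}
    \<union> {(p, s1, s2, s3). \<exists>y. s1 = s2 @ z @ y \<and> s3 = y @ w} \<times> {(q, t1, t2, t3). t2 = z \<and> t1 = w @ t3}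
    \<union> {(p, s1, s2, s3). s1 = s2 @ z @ s3 @ w} \<times> {(q, t1, t2, t3). t2 = z \<and> t3 = w @ t1}"
    by (auto simp: concat_pattern_def)
  then show ?thesis by (simp only:) (intro rectangular_Un rectangular_Times)
qed

text \<open>Cutting both sides of the equation at all their boundaries, every piece lying inside
  both some \<open>s\<^sub>i\<close> and some \<open>t\<^sub>j\<close> is a common factor of \<open>u\<close> and \<open>v\<close>.\<close>
lemma concat_pattern_if_concat_eq:
  assumes eq: "s1 @ t1 = s2 @ t2 @ s3 @ t3"
    and bound: "\<And>z. sublist z u \<Longrightarrow> sublist z v \<Longrightarrow> length z \<le> K"
    and s: "sublist s1 u" "sublist s2 u" "sublist s3 u"
    and t: "sublist t1 v" "sublist t2 v" "sublist t3 v"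
  shows "\<exists>z w. length z \<le> K \<and> length w \<le> K \<and> concat_pattern z w (s1, s2, s3) (t1, t2, t3)"
proof -
  have mid: "sublist x (xs @ x @ ys)" for x xs ys :: "'a list"
    by (rule sublist_appendI)
  have common: "length z \<le> K" if "sublist z x" "sublist x u" "sublist z y" "sublist y v" for z x y
    using bound that sublist_order.order.trans by blast
  from eq obtain us where
    "(s1 = s2 @ us \<and> us @ t1 = t2 @ s3 @ t3) \<or> (s1 @ us = s2 \<and> t1 = us @ t2 @ s3 @ t3)"
    unfolding append_eq_append_conv2 by blast
  then show ?thesis
  proof
    assume a: "s1 @ us = s2 \<and> t1 = us @ t2 @ s3 @ t3"
    have "length us \<le> K"
      by (rule common[OF _ s(2) _ t(1)]) (use a mid[of us s1 "[]"] mid[of us "[]"] in auto)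
    moreover have "length s3 \<le> K"
      by (rule common[OF _ s(3) _ t(1)]) (use a mid[of s3 "us @ t2" t3] in auto)
    ultimately show ?thesis
      using a by (auto simp: concat_pattern_def)
  next
    assume b: "s1 = s2 @ us \<and> us @ t1 = t2 @ s3 @ t3"
    then obtain vs where
      "(us = t2 @ vs \<and> vs @ t1 = s3 @ t3) \<or> (us @ vs = t2 \<and> t1 = vs @ s3 @ t3)"
      unfolding append_eq_append_conv2 by blast
    then show ?thesis
    proof
      assume b1: "us @ vs = t2 \<and> t1 = vs @ s3 @ t3"
      have "length us \<le> K"
        by (rule common[OF _ s(1) _ t(2)]) (use b b1 mid[of us s2 "[]"] mid[of us "[]" vs] in auto)
      moreover have "length s3 \<le> K"
        by (rule common[OF _ s(3) _ t(1)]) (use b1 mid[of s3 vs t3] in auto)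
      ultimately show ?thesis
        using b b1 by (auto simp: concat_pattern_def)
    next
      assume b2: "us = t2 @ vs \<and> vs @ t1 = s3 @ t3"
      have t2: "length t2 \<le> K"
        by (rule common[OF _ s(1) _ t(2)]) (use b b2 mid[of t2 s2 vs] in auto)
      from b2 obtain ws where
        "(vs = s3 @ ws \<and> ws @ t1 = t3) \<or> (vs @ ws = s3 \<and> t1 = ws @ t3)"
        unfolding append_eq_append_conv2 by blast
      then show ?thesis
      proof
        assume c1: "vs @ ws = s3 \<and> t1 = ws @ t3"
        have "length ws \<le> K"
          by (rule common[OF _ s(3) _ t(1)]) (use c1 mid[of ws vs "[]"] mid[of ws "[]" t3] in auto)
        then show ?thesis
          using b b2 c1 t2 by (auto simp: concat_pattern_def)
      next
        assume c2: "vs = s3 @ ws \<and> ws @ t1 = t3"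
        have "length ws \<le> K"
          by (rule common[OF _ s(1) _ t(3)])
            (use b b2 c2 mid[of ws "s2 @ t2 @ s3" "[]"] mid[of ws "[]" t1] in auto)
        then show ?thesis
          using b b2 c2 t2 by (auto simp: concat_pattern_def)
      qed
    qed
  qed
qed

lemma rectangular_concat_eq_splits:
  fixes X :: "'p \<Rightarrow> ('a::finite) list" and Y :: "'q \<Rightarrow> 'a list"
  assumes bound: "overlap_bounded X Y K"
  shows "rectangular {((p, s1, s2, s3), (q, t1, t2, t3)).
    factor_split (X p) (Y q) s1 t1 \<and> factor_split (X p) (Y q) s2 t2 \<and> factor_split (X p) (Y q) s3 t3
    \<and> s1 @ t1 = s2 @ t2 @ s3 @ t3}" (is "rectangular ?E")
proof -
  define F where "F = {((p, s), (q, t)). factor_split (X p) (Y q) s t}"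
  define W where "W = {z :: 'a list. length z \<le> K}"
  have "finite W"
    unfolding W_def using finite_lists_length_le[of "UNIV :: 'a set" K] by simp
  have "?E = map_prod (\<lambda>(p, s1, _). (p, s1)) (\<lambda>(q, t1, _). (q, t1)) -` F
    \<inter> map_prod (\<lambda>(p, _, s2, _). (p, s2)) (\<lambda>(q, _, t2, _). (q, t2)) -` F
    \<inter> map_prod (\<lambda>(p, _, _, s3). (p, s3)) (\<lambda>(q, _, _, t3). (q, t3)) -` F
    \<inter> (\<Union>(z, w)\<in>W \<times> W. {((p, ss), (q, ts)). concat_pattern z w ss ts})"
    (is "_ = ?R")
  proof (intro equalityI subsetI)
    fix e assume "e \<in> ?E"
    then obtain p s1 s2 s3 q t1 t2 t3 where e: "e = ((p, s1, s2, s3), (q, t1, t2, t3))"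
      and splits: "factor_split (X p) (Y q) s1 t1" "factor_split (X p) (Y q) s2 t2"
        "factor_split (X p) (Y q) s3 t3"
      and eq: "s1 @ t1 = s2 @ t2 @ s3 @ t3"
      by auto
    obtain z w where "length z \<le> K" "length w \<le> K" "concat_pattern z w (s1, s2, s3) (t1, t2, t3)"
      using concat_pattern_if_concat_eq[OF eq, of "X p" "Y q" K] bound splits
      unfolding overlap_bounded_def factor_split_def by blast
    then show "e \<in> ?R"
      using e splits by (auto simp: F_def W_def)
  qed (auto simp: F_def concat_eq_if_concat_pattern)
  moreover have "rectangular F"
    unfolding F_def by (rule rectangular_factor_split)
  ultimately show ?thesis
    using \<open>finite W\<close>
    by (simp only:)
      (intro rectangular_Int rectangular_vimage rectangular_UN;
        auto intro: rectangular_concat_pattern)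
qed

text \<open>An assignment into the factors of \<open>u @ v\<close> is represented by a left part into \<open>u\<close> and a
  right part into \<open>v\<close>.\<close>
definition glue :: "(nat \<Rightarrow> 'a list option) \<Rightarrow> (nat \<Rightarrow> 'a list option) \<Rightarrow> nat \<Rightarrow> 'a list option" where
  "glue lv rv x = (case (lv x, rv x) of (Some s, Some t) \<Rightarrow> Some (s @ t) | _ \<Rightarrow> None)"

definition split_assignment ::
    "'a list \<Rightarrow> 'a list \<Rightarrow> (nat \<Rightarrow> 'a list option) \<Rightarrow> (nat \<Rightarrow> 'a list option) \<Rightarrow> bool" where
  "split_assignment u v lv rv \<longleftrightarrow>
     (\<forall>x s t. lv x = Some s \<longrightarrow> rv x = Some t \<longrightarrow> factor_split u v s t)"

lemma glue_upd: "glue (lv(x := Some s)) (rv(x := Some t)) = (glue lv rv)(x := Some (s @ t))"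
  by (auto simp: glue_def)

lemma glue_eq_Some: "glue lv rv x = Some w \<longleftrightarrow> (\<exists>s t. lv x = Some s \<and> rv x = Some t \<and> w = s @ t)"
  by (auto simp: glue_def split: option.splits)

lemma split_assignment_upd:
  "split_assignment u v lv rv \<Longrightarrow> factor_split u v s t \<Longrightarrow>
   split_assignment u v (lv(x := Some s)) (rv(x := Some t))"
  by (auto simp: split_assignment_def)

fun term_split :: "'a fc_term \<Rightarrow> (nat \<Rightarrow> 'a list option) \<Rightarrow> (nat \<Rightarrow> 'a list option) \<Rightarrow>
    'a list \<Rightarrow> 'a list \<Rightarrow> bool" where
  "term_split (FVar x) lv rv s t \<longleftrightarrow> lv x = Some s \<and> rv x = Some t"
| "term_split (FLet c) lv rv s t \<longleftrightarrow> s @ t = [c]"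
| "term_split FEps lv rv s t \<longleftrightarrow> s = [] \<and> t = []"

lemma rectangular_term_split: "rectangular {((lv, s), (rv, t)). term_split tm lv rv s t}"
proof (cases tm)
  case (FVar x)
  then have "{((lv, s), (rv, t)). term_split tm lv rv s t} =
      {(lv, s). lv x = Some s} \<times> {(rv, t). rv x = Some t}"
    by auto
  then show ?thesis by (simp add: rectangular_Times)
next
  case (FLet c)
  then have "{((lv, s), (rv, t)). term_split tm lv rv s t} =
      {(lv, s). s = [c]} \<times> {(rv, t). t = []} \<union> {(lv, s). s = []} \<times> {(rv, t). t = [c]}"
    by (auto simp: append_eq_Cons_conv)
  then show ?thesis by (simp add: rectangular.intros)
next
  case FEps
  then have "{((lv, s), (rv, t)). term_split tm lv rv s t} = {(lv, s). s = []} \<times> {(rv, t). t = []}"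
    by auto
  then show ?thesis by (simp add: rectangular_Times)
qed

lemma term_val_glue:
  assumes "split_assignment u v lv rv"
  shows "term_val (u @ v) (glue lv rv) tm = Some w \<and> w \<in> facs (u @ v) \<longleftrightarrow>
    (\<exists>s t. factor_split u v s t \<and> term_split tm lv rv s t \<and> w = s @ t)"
proof (cases tm)
  case (FVar x)
  then show ?thesis
    using assms by (auto simp: glue_eq_Some split_assignment_def facs_append_iff)
next
  case (FLet c)
  have "[c] \<in> facs (u @ v) \<longleftrightarrow> c \<in> set (u @ v)"
    by (auto simp: facs_def sublist_def in_set_conv_decomp simp del: set_append)
  then have "term_val (u @ v) (glue lv rv) tm = Some w \<and> w \<in> facs (u @ v) \<longleftrightarrow>
      w = [c] \<and> w \<in> facs (u @ v)"
    using FLet by auto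
  also have "\<dots> \<longleftrightarrow> (\<exists>s t. factor_split u v s t \<and> term_split tm lv rv s t \<and> w = s @ t)"
    unfolding FLet facs_append_iff by fastforce
  finally show ?thesis .
next
  case FEps
  have "factor_split u v [] []"
    by (simp add: factor_split_def)
  then show ?thesis
    using FEps by (auto simp: facs_def)
qed

lemma fc_sat_FCat_glue:
  assumes "split_assignment u v lv rv"
  shows "fc_sat (u @ v) (glue lv rv) (FCat a b c) \<longleftrightarrow>
    (\<exists>s1 s2 s3 t1 t2 t3. factor_split u v s1 t1 \<and> factor_split u v s2 t2 \<and> factor_split u v s3 t3
      \<and> s1 @ t1 = s2 @ t2 @ s3 @ t3
      \<and> term_split a lv rv s1 t1 \<and> term_split b lv rv s2 t2 \<and> term_split c lv rv s3 t3)"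
    (is "_ \<longleftrightarrow> ?rhs")
proof -
  have "fc_sat (u @ v) (glue lv rv) (FCat a b c) \<longleftrightarrow>
    (\<exists>x y z. (term_val (u @ v) (glue lv rv) a = Some x \<and> x \<in> facs (u @ v))
      \<and> (term_val (u @ v) (glue lv rv) b = Some y \<and> y \<in> facs (u @ v))
      \<and> (term_val (u @ v) (glue lv rv) c = Some z \<and> z \<in> facs (u @ v)) \<and> x = y @ z)"
    by auto
  also have "\<dots> \<longleftrightarrow> ?rhs"
    unfolding term_val_glue[OF assms] by fastforce
  finally show ?thesis .
qed

lemma fc_sat_FEx_glue:
  "fc_sat (u @ v) (glue lv rv) (FEx x \<phi>) \<longleftrightarrow>
    (\<exists>s t. factor_split u v s t \<and> fc_sat (u @ v) (glue (lv(x := Some s)) (rv(x := Some t))) \<phi>)"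
  by (simp add: glue_upd Bex_def facs_append_iff) blast

definition rectangular_semantics :: "('p \<Rightarrow> 'a list) \<Rightarrow> ('q \<Rightarrow> 'a list) \<Rightarrow> 'a fc \<Rightarrow> bool" where
  "rectangular_semantics X Y \<phi> \<longleftrightarrow> (\<exists>S. rectangular S \<and>
     (\<forall>p q lv rv. split_assignment (X p) (Y q) lv rv \<longrightarrow>
        (fc_sat (X p @ Y q) (glue lv rv) \<phi> \<longleftrightarrow> ((p, lv), (q, rv)) \<in> S)))"

lemma map_prod_fst_image_iff: "(a, b) \<in> map_prod fst fst ` S \<longleftrightarrow> (\<exists>l r. ((a, l), (b, r)) \<in> S)"
  by force

lemma rectangular_semantics_FCat:
  fixes X :: "'p \<Rightarrow> ('a::finite) list" and Y :: "'q \<Rightarrow> 'a list"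
  assumes "overlap_bounded X Y K"
  shows "rectangular_semantics X Y (FCat a b c)"
proof -
  define E where "E = {((p, s1, s2, s3), (q, t1, t2, t3)).
    factor_split (X p) (Y q) s1 t1 \<and> factor_split (X p) (Y q) s2 t2 \<and> factor_split (X p) (Y q) s3 t3
    \<and> s1 @ t1 = s2 @ t2 @ s3 @ t3}"
  define M where "M tm = {((lv, s), (rv, t)). term_split tm lv rv s t}" for tm :: "'a fc_term"
  define S where "S = map_prod fst fst ` (
      map_prod (\<lambda>((p, _), ss). (p, ss)) (\<lambda>((q, _), ts). (q, ts)) -` E
    \<inter> map_prod (\<lambda>((_, lv), s1, _). (lv, s1)) (\<lambda>((_, rv), t1, _). (rv, t1)) -` M a
    \<inter> map_prod (\<lambda>((_, lv), _, s2, _). (lv, s2)) (\<lambda>((_, rv), _, t2, _). (rv, t2)) -` M b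
    \<inter> map_prod (\<lambda>((_, lv), _, _, s3). (lv, s3)) (\<lambda>((_, rv), _, _, t3). (rv, t3)) -` M c)"
  have "rectangular E"
    unfolding E_def using assms by (rule rectangular_concat_eq_splits)
  then have "rectangular S"
    unfolding S_def M_def
    by (intro rectangular_image rectangular_Int rectangular_vimage rectangular_term_split)
  moreover have "fc_sat (X p @ Y q) (glue lv rv) (FCat a b c) \<longleftrightarrow> ((p, lv), (q, rv)) \<in> S"
    if "split_assignment (X p) (Y q) lv rv" for p q lv rv
    unfolding fc_sat_FCat_glue[OF that] S_def map_prod_fst_image_iff E_def M_def by auto
  ultimately show ?thesis
    unfolding rectangular_semantics_def by blast
qed

lemma rectangular_semantics_cong:
  "(\<And>w \<sigma>. fc_sat w \<sigma> \<phi> \<longleftrightarrow> fc_sat w \<sigma> \<psi>) \<Longrightarrow> rectangular_semantics X Y \<phi> \<Longrightarrow>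
   rectangular_semantics X Y \<psi>"
  by (simp add: rectangular_semantics_def)

lemma rectangular_semantics_FAnd:
  assumes "rectangular_semantics X Y \<phi>" and "rectangular_semantics X Y \<psi>"
  shows "rectangular_semantics X Y (FAnd \<phi> \<psi>)"
proof -
  obtain S1 S2 where "rectangular S1" "rectangular S2"
    and "\<forall>p q lv rv. split_assignment (X p) (Y q) lv rv \<longrightarrow>
      (fc_sat (X p @ Y q) (glue lv rv) \<phi> \<longleftrightarrow> ((p, lv), (q, rv)) \<in> S1)"
    and "\<forall>p q lv rv. split_assignment (X p) (Y q) lv rv \<longrightarrow>
      (fc_sat (X p @ Y q) (glue lv rv) \<psi> \<longleftrightarrow> ((p, lv), (q, rv)) \<in> S2)"
    using assms unfolding rectangular_semantics_def by blast
  then show ?thesis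
    unfolding rectangular_semantics_def
    by (intro exI[of _ "S1 \<inter> S2"]) (auto intro: rectangular_Int)
qed

lemma rectangular_semantics_FNot:
  assumes "rectangular_semantics X Y \<phi>"
  shows "rectangular_semantics X Y (FNot \<phi>)"
proof -
  obtain S where "rectangular S"
    and "\<forall>p q lv rv. split_assignment (X p) (Y q) lv rv \<longrightarrow>
      (fc_sat (X p @ Y q) (glue lv rv) \<phi> \<longleftrightarrow> ((p, lv), (q, rv)) \<in> S)"
    using assms unfolding rectangular_semantics_def by blast
  then show ?thesis
    unfolding rectangular_semantics_def
    by (intro exI[of _ "- S"]) (auto intro: rectangular_Compl)
qed

lemma rectangular_semantics_FEx:
  assumes "rectangular_semantics X Y \<phi>"
  shows "rectangular_semantics X Y (FEx x \<phi>)"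
proof -
  obtain S\<^sub>\<phi> where "rectangular S\<^sub>\<phi>" and S\<^sub>\<phi>: "\<And>p q lv rv. split_assignment (X p) (Y q) lv rv \<Longrightarrow>
      fc_sat (X p @ Y q) (glue lv rv) \<phi> \<longleftrightarrow> ((p, lv), (q, rv)) \<in> S\<^sub>\<phi>"
    using assms unfolding rectangular_semantics_def by blast
  define F where "F = {((p, s), (q, t)). factor_split (X p) (Y q) s t}"
  define S where "S = map_prod fst fst ` (
      map_prod (\<lambda>((p, _), s). (p, s)) (\<lambda>((q, _), t). (q, t)) -` F
    \<inter> map_prod (\<lambda>((p, lv), s). (p, lv(x := Some s))) (\<lambda>((q, rv), t). (q, rv(x := Some t))) -` S\<^sub>\<phi>)"
  have "rectangular S"
    unfolding S_def F_def using \<open>rectangular S\<^sub>\<phi>\<close>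
    by (intro rectangular_image rectangular_Int rectangular_vimage rectangular_factor_split)
  moreover have "fc_sat (X p @ Y q) (glue lv rv) (FEx x \<phi>) \<longleftrightarrow> ((p, lv), (q, rv)) \<in> S"
    if "split_assignment (X p) (Y q) lv rv" for p q lv rv
  proof -
    have "fc_sat (X p @ Y q) (glue lv rv) (FEx x \<phi>) \<longleftrightarrow> (\<exists>s t. factor_split (X p) (Y q) s t
        \<and> fc_sat (X p @ Y q) (glue (lv(x := Some s)) (rv(x := Some t))) \<phi>)"
      by (rule fc_sat_FEx_glue)
    also have "\<dots> \<longleftrightarrow> (\<exists>s t. factor_split (X p) (Y q) s t
        \<and> ((p, lv(x := Some s)), (q, rv(x := Some t))) \<in> S\<^sub>\<phi>)"
      using S\<^sub>\<phi> split_assignment_upd[OF that] by blast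
    also have "\<dots> \<longleftrightarrow> ((p, lv), (q, rv)) \<in> S"
      unfolding S_def map_prod_fst_image_iff F_def by auto
    finally show ?thesis .
  qed
  ultimately show ?thesis
    unfolding rectangular_semantics_def by blast
qed

lemma rectangular_semantics_if_overlap_bounded:
  fixes X :: "'p \<Rightarrow> ('a::finite) list" and Y :: "'q \<Rightarrow> 'a list"
  assumes "overlap_bounded X Y K"
  shows "rectangular_semantics X Y \<phi>"
proof (induction \<phi>)
  case (FCat a b c)
  show ?case using assms by (rule rectangular_semantics_FCat)
next
  case (FAnd \<phi> \<psi>)
  then show ?case by (rule rectangular_semantics_FAnd)
next
  case (FOr \<phi> \<psi>)
  then have "rectangular_semantics X Y (FNot (FAnd (FNot \<phi>) (FNot \<psi>)))"
    by (intro rectangular_semantics_FNot rectangular_semantics_FAnd)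
  then show ?case
    by (rule rectangular_semantics_cong[rotated]) simp
next
  case (FNot \<phi>)
  then show ?case by (rule rectangular_semantics_FNot)
next
  case (FEx x \<phi>)
  then show ?case by (rule rectangular_semantics_FEx)
next
  case (FAll x \<phi>)
  then have "rectangular_semantics X Y (FNot (FEx x (FNot \<phi>)))"
    by (intro rectangular_semantics_FNot rectangular_semantics_FEx)
  then show ?case
    by (rule rectangular_semantics_cong[rotated]) simp
qed

lemma rectangular_FC_slice:
  fixes X :: "'p \<Rightarrow> ('a::finite) list" and Y :: "'q \<Rightarrow> 'a list"
  assumes "overlap_bounded X Y K" and "L \<in> FC_languages"
  shows "rectangular {(p, q). X p @ Y q \<in> L}"
proof -
  obtain \<phi> where L: "L = fc_lang \<phi>"
    using assms(2) unfolding FC_languages_def by blast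
  have "rectangular_semantics X Y \<phi>"
    using assms(1) by (rule rectangular_semantics_if_overlap_bounded)
  then obtain S where "rectangular S" and S: "\<And>p q lv rv. split_assignment (X p) (Y q) lv rv \<Longrightarrow>
      fc_sat (X p @ Y q) (glue lv rv) \<phi> \<longleftrightarrow> ((p, lv), (q, rv)) \<in> S"
    unfolding rectangular_semantics_def by blast
  have "glue (\<lambda>_. None) (\<lambda>_. None) = ((\<lambda>_. None) :: nat \<Rightarrow> 'a list option)"
    by (simp add: glue_def fun_eq_iff)
  then have "X p @ Y q \<in> L \<longleftrightarrow> ((p, \<lambda>_. None), (q, \<lambda>_. None)) \<in> S" for p q
    using S[of p q "\<lambda>_. None" "\<lambda>_. None"] by (simp add: L fc_lang_def split_assignment_def)
  then have "{(p, q). X p @ Y q \<in> L} = map_prod (\<lambda>p. (p, \<lambda>_. None)) (\<lambda>q. (q, \<lambda>_. None)) -` S"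
    by auto
  then show ?thesis
    using \<open>rectangular S\<close> by (simp add: rectangular_vimage)
qed

lemma not_FC_language_if_fooling:
  fixes X Y :: "nat \<Rightarrow> ('a::finite) list"
  assumes "overlap_bounded X Y K"
    and "\<And>n. X n @ Y n \<in> L"
    and "\<And>n m. X n @ Y m \<in> L \<Longrightarrow> X m @ Y n \<in> L \<Longrightarrow> n = m"
  shows "L \<notin> FC_languages"
proof
  assume "L \<in> FC_languages"
  then have "rectangular {(p, q). X p @ Y q \<in> L}"
    by (rule rectangular_FC_slice[OF assms(1)])
  then show False
    using rectangular_diagonal_swap[of "{(p, q). X p @ Y q \<in> L}"] assms(2,3) by auto
qed

lemma pw_0 [simp]: "pw u 0 = []"
  by (simp add: pw_def)

lemma pw_Suc [simp]: "pw u (Suc n) = u @ pw u n"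
  by (simp add: pw_def)

lemma length_pw [simp]: "length (pw u n) = n * length u"
  by (induction n) simp_all

lemma set_pw_subset: "set (pw u n) \<subseteq> set u"
  by (induction n) auto

lemma pw_inj: "u \<noteq> [] \<Longrightarrow> pw u n = pw u k \<Longrightarrow> n = k"
  by (metis length_pw length_0_conv mult_cancel2)

lemma pw_append_cancel:
  assumes "\<not> prefix u x" and "\<not> prefix u y" and "pw u n @ x = pw u k @ y"
  shows "n = k \<and> x = y"
  using assms(3)
proof (induction n arbitrary: k)
  case 0
  then show ?case
    using assms(1) by (cases k) auto
next
  case (Suc n)
  then show ?case
    using assms(2) by (cases k) auto
qed

lemma sublist_pw_short: "length w \<le> length u \<Longrightarrow> sublist w (pw u n) \<Longrightarrow> sublist w (u @ u)"
proof (induction n)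
  case (Suc n)
  then consider "sublist w u" | "sublist w (pw u n)"
    | w1 w2 where "w = w1 @ w2" "suffix w1 u" "prefix w2 (pw u n)"
    by (auto simp: sublist_append)
  then show ?case
  proof cases
    case 3
    have "prefix w2 u"
    proof (cases n)
      case (Suc n')
      then show ?thesis
        using 3 Suc.prems(1) prefix_length_prefix[of w2 "pw u n" u] by auto
    qed (use 3 in simp)
    then show ?thesis
      using 3 by (auto simp: sublist_append)
  qed (use Suc.IH Suc.prems(1) in \<open>auto simp: sublist_append\<close>)
qed simp

lemma overlap_bounded_sym: "overlap_bounded X Y K \<Longrightarrow> overlap_bounded Y X K"
  unfolding overlap_bounded_def by blast

lemma overlap_bounded_unary:
  assumes "\<And>p. set (X p) \<subseteq> {c}" and "\<And>q. \<not> sublist [c, c] (Y q)"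
  shows "overlap_bounded X Y 1"
  unfolding overlap_bounded_def
proof (intro allI impI)
  fix p q z assume "sublist z (X p)" "sublist z (Y q)"
  show "length z \<le> 1"
  proof (rule ccontr)
    assume "\<not> length z \<le> 1"
    then obtain x y z' where "z = x # y # z'"
      by (cases z rule: remdups_adj.cases) auto
    moreover have "set z \<subseteq> {c}"
      using \<open>sublist z (X p)\<close> assms(1) set_mono_sublist by blast
    ultimately have "prefix [c, c] z"
      by simp
    then show False
      using \<open>sublist z (Y q)\<close> assms(2) prefix_imp_sublist sublist_order.order.trans by blast
  qed
qed

lemma overlap_bounded_pw:
  assumes "K < length u" and "K < length v"
    and "\<And>w. length w = Suc K \<Longrightarrow> sublist w (u @ u) \<Longrightarrow> sublist w (v @ v) \<Longrightarrow> False"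
  shows "overlap_bounded (pw u) (pw v) K"
  unfolding overlap_bounded_def
proof (intro allI impI)
  fix p q z assume z: "sublist z (pw u p)" "sublist z (pw v q)"
  show "length z \<le> K"
  proof (rule ccontr)
    assume "\<not> length z \<le> K"
    define w where "w = take (Suc K) z"
    have "length w = Suc K"
      using \<open>\<not> length z \<le> K\<close> by (simp add: w_def)
    moreover have "sublist w z"
      unfolding w_def by (rule prefix_imp_sublist) (rule take_is_prefix)
    then have "sublist w (u @ u)" "sublist w (v @ v)"
      using z assms(1,2) \<open>length w = Suc K\<close>
      by (auto intro: sublist_pw_short sublist_order.order.trans)
    ultimately show False
      using assms(3) by blast
  qed
qed

lemma not_FC_language_a_ba:
  fixes a b :: "'a::finite"
  assumes "a \<noteq> b"
  shows "{pw [a] n @ pw [b, a] n | n. True} \<notin> FC_languages" (is "?L \<notin> _")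
proof (rule not_FC_language_if_fooling[where X = "pw [a]" and Y = "pw [b, a]"])
  have "\<not> sublist [a, a] (pw [b, a] q)" for q
    using sublist_pw_short[of "[a, a]" "[b, a]" q] assms by (auto simp: sublist_Cons_right)
  then show "overlap_bounded (pw [a]) (pw [b, a]) 1"
    using set_pw_subset[of "[a]"] by (intro overlap_bounded_unary[of _ a]) auto
next
  fix n m
  assume "pw [a] n @ pw [b, a] m \<in> ?L"
  then obtain k where eq: "pw [a] n @ pw [b, a] m = pw [a] k @ pw [b, a] k"
    by blast
  have no_prefix: "\<not> prefix [a] (pw [b, a] j)" for j
    using assms by (cases j) auto
  have "n = k \<and> pw [b, a] m = pw [b, a] k"
    using pw_append_cancel[OF no_prefix no_prefix eq] by simp
  then show "n = m"
    using pw_inj[of "[b, a]" m k] by simp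
qed blast

lemma not_FC_language_a_ba_le:
  fixes a b :: "'a::finite"
  assumes "a \<noteq> b"
  shows "{pw [a] i @ pw [b, a] j | i j. 1 \<le> i \<and> i \<le> j} \<notin> FC_languages" (is "?L \<notin> _")
proof (rule not_FC_language_if_fooling
    [where X = "\<lambda>n. pw [a] (Suc n)" and Y = "\<lambda>n. pw [b, a] (Suc n)"])
  have "\<not> sublist [a, a] (pw [b, a] q)" for q
    using sublist_pw_short[of "[a, a]" "[b, a]" q] assms by (auto simp: sublist_Cons_right)
  then show "overlap_bounded (\<lambda>n. pw [a] (Suc n)) (\<lambda>n. pw [b, a] (Suc n)) 1"
    using set_pw_subset[of "[a]"]
    by (intro overlap_bounded_unary[of _ a]) (auto simp del: pw_Suc)
next
  have no_prefix: "\<not> prefix [a] (pw [b, a] j)" for j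
    using assms by (cases j) auto
  have le: "n \<le> m" if mem: "pw [a] (Suc n) @ pw [b, a] (Suc m) \<in> ?L" for n m
  proof -
    obtain i j where "i \<le> j" and eq: "pw [a] (Suc n) @ pw [b, a] (Suc m) = pw [a] i @ pw [b, a] j"
      using mem by (auto simp del: pw_Suc)
    have "Suc n = i \<and> pw [b, a] (Suc m) = pw [b, a] j"
      using pw_append_cancel[OF no_prefix no_prefix eq] by simp
    then show ?thesis
      using \<open>i \<le> j\<close> pw_inj[of "[b, a]" "Suc m" j] by simp
  qed
  fix n m
  assume "pw [a] (Suc n) @ pw [b, a] (Suc m) \<in> ?L" and "pw [a] (Suc m) @ pw [b, a] (Suc n) \<in> ?L"
  from le[OF this(1)] le[OF this(2)] show "n = m"
    by simp
next
  fix n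
  have "1 \<le> Suc n \<and> Suc n \<le> Suc n"
    by simp
  then show "pw [a] (Suc n) @ pw [b, a] (Suc n) \<in> ?L"
    by blast
qed

lemma not_FC_language_b_a_b_sum:
  fixes a b :: "'a::finite"
  assumes "a \<noteq> b"
  shows "{pw [b] n @ pw [a] m @ pw [b] (n + m) | n m. True} \<notin> FC_languages" (is "?L \<notin> _")
proof (rule not_FC_language_if_fooling
    [where X = "\<lambda>n. pw [a] (Suc n)" and Y = "\<lambda>n. pw [b] (Suc n)"])
  have "\<not> sublist [a, a] (pw [b] q)" for q
    using set_pw_subset[of "[b]" q] set_mono_sublist[of "[a, a]"] assms by auto
  then show "overlap_bounded (\<lambda>n. pw [a] (Suc n)) (\<lambda>n. pw [b] (Suc n)) 1"
    using set_pw_subset[of "[a]"]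
    by (intro overlap_bounded_unary[of _ a]) (auto simp del: pw_Suc)
next
  fix n m
  assume "pw [a] (Suc n) @ pw [b] (Suc m) \<in> ?L"
  then obtain N M where eq: "pw [a] (Suc n) @ pw [b] (Suc m) = pw [b] N @ pw [a] M @ pw [b] (N + M)"
    by (auto simp del: pw_Suc)
  have "N = 0"
    using eq assms by (cases N) auto
  then have "pw [a] (Suc n) @ pw [b] (Suc m) = pw [a] M @ pw [b] M"
    using eq by simp
  moreover have no_prefix: "\<not> prefix [a] (pw [b] j)" for j
    using assms by (cases j) auto
  ultimately have "Suc n = M \<and> pw [b] (Suc m) = pw [b] M"
    using pw_append_cancel[OF no_prefix no_prefix] by blast
  then show "n = m"
    using pw_inj[of "[b]" "Suc m" M] by simp
next
  fix n
  have "pw [a] (Suc n) @ pw [b] (Suc n) = pw [b] 0 @ pw [a] (Suc n) @ pw [b] (0 + Suc n)"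
    by simp
  then show "pw [a] (Suc n) @ pw [b] (Suc n) \<in> ?L"
    by blast
qed

lemma not_FC_language_b_a_b_product:
  fixes a b :: "'a::finite"
  assumes "a \<noteq> b"
  shows "{pw [b] n @ pw [a] m @ pw [b] (n * m) | n m. True} \<notin> FC_languages" (is "?L \<notin> _")
proof (rule not_FC_language_if_fooling
    [where X = "\<lambda>n. b # pw [a] (Suc n)" and Y = "\<lambda>n. pw [b] (Suc n)"])
  have "\<not> sublist [b, b] (pw [a] n)" for n
    using set_pw_subset[of "[a]" n] set_mono_sublist[of "[b, b]"] assms by auto
  then have "\<not> sublist [b, b] (b # pw [a] (Suc p))" for p
    using assms by (simp add: sublist_Cons_right)
  then have "overlap_bounded (\<lambda>n. pw [b] (Suc n)) (\<lambda>n. b # pw [a] (Suc n)) 1"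
    using set_pw_subset[of "[b]"]
    by (intro overlap_bounded_unary[of _ b]) (auto simp del: pw_Suc)
  then show "overlap_bounded (\<lambda>n. b # pw [a] (Suc n)) (\<lambda>n. pw [b] (Suc n)) 1"
    by (rule overlap_bounded_sym)
next
  fix n m
  assume "(b # pw [a] (Suc n)) @ pw [b] (Suc m) \<in> ?L"
  then obtain N M
    where "(b # pw [a] (Suc n)) @ pw [b] (Suc m) = pw [b] N @ pw [a] M @ pw [b] (N * M)"
    by (auto simp del: pw_Suc)
  then have eq\<^sub>b: "pw [b] (Suc 0) @ (pw [a] (Suc n) @ pw [b] (Suc m))
      = pw [b] N @ (pw [a] M @ pw [b] (N * M))"
    by simp
  have "\<not> prefix [b] (pw [a] (Suc n) @ pw [b] (Suc m))"
    using assms by simp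
  moreover have "\<not> prefix [b] (pw [a] M @ pw [b] (N * M))"
    using assms by (cases M) simp_all
  ultimately have "Suc 0 = N \<and> pw [a] (Suc n) @ pw [b] (Suc m) = pw [a] M @ pw [b] (N * M)"
    using pw_append_cancel[OF _ _ eq\<^sub>b] by simp
  then have eq: "pw [a] (Suc n) @ pw [b] (Suc m) = pw [a] M @ pw [b] M"
    by auto
  have no_prefix: "\<not> prefix [a] (pw [b] j)" for j
    using assms by (cases j) auto
  have "Suc n = M \<and> pw [b] (Suc m) = pw [b] M"
    using pw_append_cancel[OF no_prefix no_prefix eq] by simp
  then show "n = m"
    using pw_inj[of "[b]" "Suc m" M] by simp
next
  fix n
  have "(b # pw [a] (Suc n)) @ pw [b] (Suc n)
      = pw [b] (Suc 0) @ pw [a] (Suc n) @ pw [b] (Suc 0 * Suc n)"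
    by simp
  then show "(b # pw [a] (Suc n)) @ pw [b] (Suc n) \<in> ?L"
    by blast
qed

lemma not_FC_language_abaabb_bbaaba:
  fixes a b :: "'a::finite"
  assumes "a \<noteq> b"
  shows "{pw [a, b, a, a, b, b] m @ pw [b, b, a, a, b, a] m | m. True} \<notin> FC_languages"
    (is "?L \<notin> _")
proof (rule not_FC_language_if_fooling
    [where X = "pw [a, b, a, a, b, b]" and Y = "pw [b, b, a, a, b, a]"])
  show "overlap_bounded (pw [a, b, a, a, b, b]) (pw [b, b, a, a, b, a]) 4"
    using assms
    by (intro overlap_bounded_pw) (auto simp: sublist_Cons_right length_Suc_conv numeral_eq_Suc)
next
  fix n m
  assume "pw [a, b, a, a, b, b] n @ pw [b, b, a, a, b, a] m \<in> ?L"
  then obtain k where eq: "pw [a, b, a, a, b, b] n @ pw [b, b, a, a, b, a] m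
    = pw [a, b, a, a, b, b] k @ pw [b, b, a, a, b, a] k"
    by blast
  have no_prefix: "\<not> prefix [a, b, a, a, b, b] (pw [b, b, a, a, b, a] j)" for j
    using assms by (cases j) auto
  have "n = k \<and> pw [b, b, a, a, b, a] m = pw [b, b, a, a, b, a] k"
    using pw_append_cancel[OF no_prefix no_prefix eq] by simp
  then show "n = m"
    using pw_inj[of "[b, b, a, a, b, a]" m k] by simp
qed blast

lemma not_FC_language_a_b_ab:
  fixes a b :: "'a::finite"
  assumes "a \<noteq> b"
  shows "{pw [a] n @ pw [b] n @ pw [a, b] n | n. True} \<notin> FC_languages" (is "?L \<notin> _")
proof (rule not_FC_language_if_fooling[where X = "pw [a]" and Y = "\<lambda>n. pw [b] n @ pw [a, b] n"])
  have "\<not> sublist [a, a] (pw [a, b] q)" for q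
    using sublist_pw_short[of "[a, a]" "[a, b]" q] assms by (auto simp: sublist_Cons_right)
  then have "\<not> sublist [a, a] (pw [b] q @ pw [a, b] q')" for q q'
    using assms by (induction q) (auto simp: sublist_Cons_right)
  then show "overlap_bounded (pw [a]) (\<lambda>n. pw [b] n @ pw [a, b] n) 1"
    using set_pw_subset[of "[a]"] by (intro overlap_bounded_unary[of _ a]) auto
next
  fix n m
  assume "pw [a] n @ pw [b] m @ pw [a, b] m \<in> ?L"
  then obtain k
    where eq: "pw [a] n @ (pw [b] m @ pw [a, b] m) = pw [a] k @ (pw [b] k @ pw [a, b] k)"
    by blast
  have no_prefix: "\<not> prefix [a] (pw [b] j @ pw [a, b] j)" for j
    using assms by (cases j) auto
  have "n = k" and "pw [b] m @ pw [a, b] m = pw [b] k @ pw [a, b] k"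
    using pw_append_cancel[OF no_prefix no_prefix eq] by simp_all
  moreover from arg_cong[OF this(2), of length] have "m = k"
    by simp
  ultimately show "n = m"
    by simp
qed blast

theorem lemma4p14:
  fixes a b :: "'a::finite"
  assumes "a \<noteq> b"
  shows "{pw [a] n @ pw [b, a] n | n. True} \<notin> FC_languages \<and>
         {pw [a] i @ pw [b, a] j | i j. 1 \<le> i \<and> i \<le> j} \<notin> FC_languages \<and>
         {pw [b] n @ pw [a] m @ pw [b] (n + m) | n m. True} \<notin> FC_languages \<and>
         {pw [b] n @ pw [a] m @ pw [b] (n * m) | n m. True} \<notin> FC_languages \<and>
         {pw [a, b, a, a, b, b] m @ pw [b, b, a, a, b, a] m | m. True} \<notin> FC_languages \<and>
         {pw [a] n @ pw [b] n @ pw [a, b] n | n. True} \<notin> FC_languages"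
  using not_FC_language_a_ba[OF assms] not_FC_language_a_ba_le[OF assms]
    not_FC_language_b_a_b_sum[OF assms] not_FC_language_b_a_b_product[OF assms]
    not_FC_language_abaabb_bbaaba[OF assms] not_FC_language_a_b_ab[OF assms]
  by blast

end
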